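(* Let $X$ be a compact Hausdorff space and let $L$ be a normal, distributive and disjunctive lattice. If $X$ has a base $\mathcal B$ for its closed sets that is a sublattice of the lattice of closed subsets of $X$ (containing $\emptyset$ and $X$) and there is a lattice embedding of $\mathcal B$ into $L$, then the Wallman space $wL$ admits a continuous surjection onto $X$.
   Context: Lattices have a least element $\mathbf 0$ and a greatest element $\mathbf 1$, and lattice embeddings are injective maps preserving $\wedge,\vee,\mathbf 0,\mathbf 1$ (for $\mathcal B$: $\cap,\cup,\emptyset,X$). $L$ is disjunctive if whenever $a\not\le b$ there is $c\in L$ with $c\le a$ and $c\wedge b=\mathbf 0$. $L$ is normal if for all $x,y$ with $x\wedge y=\mathbf 0$ there are $u,v$ with $x\wedge u=\mathbf 0$, $y\wedge v=\mathbf 0$ and $u\vee v=\mathbf 1$. The Wallman space $wL$ is the set of ultrafilters (maximal proper filters) of $L$, topologized by taking the sets $\{p\in wL: a\in p\}$, $a\in L$, as a base for the closed sets; it is a compact $T_1$-space, and it is Hausdorff when $L$ is normal. *)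

theory Defs
  imports "HOL-Analysis.Analysis"
begin

definition disjunctive_lattice :: "'l::bounded_lattice itself \<Rightarrow> bool" where
  "disjunctive_lattice _ \<longleftrightarrow>
     (\<forall>a b::'l. \<not> a \<le> b \<longrightarrow> (\<exists>c. c \<le> a \<and> inf c b = bot))"

definition normal_lattice :: "'l::bounded_lattice itself \<Rightarrow> bool" where
  "normal_lattice _ \<longleftrightarrow>
     (\<forall>x y::'l. inf x y = bot \<longrightarrow>
        (\<exists>u v. inf x u = bot \<and> inf y v = bot \<and> sup u v = top))"

definition lattice_filter :: "'l::bounded_lattice set \<Rightarrow> bool" where
  "lattice_filter F \<longleftrightarrow> top \<in> F \<and> bot \<notin> F \<and>
     (\<forall>a\<in>F. \<forall>b\<in>F. inf a b \<in> F) \<and>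
     (\<forall>a\<in>F. \<forall>b. a \<le> b \<longrightarrow> b \<in> F)"

definition lattice_ultrafilter :: "'l::bounded_lattice set \<Rightarrow> bool" where
  "lattice_ultrafilter F \<longleftrightarrow> lattice_filter F \<and>
     (\<forall>G. lattice_filter G \<and> F \<subseteq> G \<longrightarrow> G = F)"

definition wallman_points :: "'l::bounded_lattice itself \<Rightarrow> 'l set set" where
  "wallman_points _ = {p. lattice_ultrafilter p}"

definition wallman_basic :: "'l::bounded_lattice \<Rightarrow> 'l set set" where
  "wallman_basic a = {p. lattice_ultrafilter p \<and> a \<in> p}"

definition wallman_space :: "'l::bounded_lattice itself \<Rightarrow> 'l set topology" where
  "wallman_space T = topology_generated_by
     {wallman_points T - wallman_basic a | a. True}"

definition closed_base_sublattice :: "'a topology \<Rightarrow> 'a set set \<Rightarrow> bool" where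
  "closed_base_sublattice X B \<longleftrightarrow>
     (\<forall>b\<in>B. closedin X b) \<and>
     (\<forall>C. closedin X C \<longrightarrow> (\<exists>\<A>\<subseteq>B. C = topspace X \<inter> \<Inter>\<A>)) \<and>
     {} \<in> B \<and> topspace X \<in> B \<and>
     (\<forall>a\<in>B. \<forall>b\<in>B. a \<inter> b \<in> B \<and> a \<union> b \<in> B)"

definition lattice_embedding_on ::
    "'a set set \<Rightarrow> 'a set \<Rightarrow> ('a set \<Rightarrow> 'l::bounded_lattice) \<Rightarrow> bool" where
  "lattice_embedding_on B S f \<longleftrightarrow> inj_on f B \<and>
     f {} = bot \<and> f S = top \<and>
     (\<forall>a\<in>B. \<forall>b\<in>B. f (a \<inter> b) = inf (f a) (f b) \<and> f (a \<union> b) = sup (f a) (f b))"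

end

theory Submission
  imports Defs
begin

text \<open>An ultrafilter p of L determines the family of basic closed sets b with f b \<in> p.
Since f preserves finite meets and sends {} to bot, this family has the finite intersection
property, so by compactness it has a common point. Ultrafilters of a distributive lattice are
prime and f sends a cover b \<union> b' = X to a join equal to top, so p contains f b or f b';
by regularity of X this makes the common point g p unique, and the same argument shows that
g pulls closed sets back to closed sets. A point x is g p for every ultrafilter p containing
all f b with x \<in> b.\<close>

lemma lattice_filterD:
  assumes "lattice_filter F"
  shows "top \<in> F" and "bot \<notin> F" and "a \<in> F \<Longrightarrow> b \<in> F \<Longrightarrow> inf a b \<in> F"
    and "a \<in> F \<Longrightarrow> a \<le> b \<Longrightarrow> b \<in> F"
  using assms unfolding lattice_filter_def by blast+

lemma lattice_ultrafilter_imp_filter: "lattice_ultrafilter p \<Longrightarrow> lattice_filter p"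
  by (simp add: lattice_ultrafilter_def)

lemma lattice_filter_adjoin:
  assumes p: "lattice_filter p" and meets: "\<forall>d\<in>p. inf a d \<noteq> bot"
  shows "lattice_filter {c. \<exists>d\<in>p. inf a d \<le> c}" (is "lattice_filter ?G")
  unfolding lattice_filter_def
proof (intro conjI ballI allI impI)
  show "top \<in> ?G" using lattice_filterD(1)[OF p] by auto
  show "bot \<notin> ?G" using meets bot_unique by blast
next
  fix x y assume "x \<in> ?G" "y \<in> ?G"
  then obtain d1 d2 where d: "d1 \<in> p" "d2 \<in> p" "inf a d1 \<le> x" "inf a d2 \<le> y"
    by auto
  have "inf d1 d2 \<in> p" using lattice_filterD(3)[OF p d(1,2)] .
  moreover have "inf a (inf d1 d2) \<le> inf x y"
    using d(3,4) by (meson inf_mono le_inf_iff order_refl order_trans)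
  ultimately show "inf x y \<in> ?G" by blast
next
  fix x y assume "x \<in> ?G" "x \<le> y"
  then show "y \<in> ?G" using order_trans by blast
qed

lemma lattice_ultrafilter_disjoint_if_not_mem:
  assumes p: "lattice_ultrafilter p" and "a \<notin> p"
  shows "\<exists>d\<in>p. inf a d = bot"
proof (rule ccontr)
  define G where "G = {c. \<exists>d\<in>p. inf a d \<le> c}"
  assume "\<not> (\<exists>d\<in>p. inf a d = bot)"
  then have "lattice_filter G"
    unfolding G_def using lattice_filter_adjoin lattice_ultrafilter_imp_filter[OF p] by blast
  moreover have "p \<subseteq> G" unfolding G_def using inf_le2 by blast
  ultimately have "G = p" using p by (simp add: lattice_ultrafilter_def)
  moreover have "a \<in> G" unfolding G_def using lattice_filterD(1)[OF lattice_ultrafilter_imp_filter[OF p]]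
    by auto
  ultimately show False using \<open>a \<notin> p\<close> by simp
qed

lemma lattice_ultrafilter_sup_mem:
  fixes p :: "'l::{bounded_lattice, distrib_lattice} set"
  assumes p: "lattice_ultrafilter p" and "sup a b \<in> p"
  shows "a \<in> p \<or> b \<in> p"
proof (rule ccontr)
  assume "\<not> (a \<in> p \<or> b \<in> p)"
  then obtain d1 d2 where d: "d1 \<in> p" "d2 \<in> p" "inf a d1 = bot" "inf b d2 = bot"
    using lattice_ultrafilter_disjoint_if_not_mem[OF p] by meson
  have pf: "lattice_filter p" using p by (rule lattice_ultrafilter_imp_filter)
  have "inf (sup a b) (inf d1 d2) \<in> p"
    using \<open>sup a b \<in> p\<close> d(1,2) by (intro lattice_filterD(3)[OF pf])
  moreover have "inf a (inf d1 d2) = bot" using d(3) by (metis inf.assoc inf_bot_left)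
  moreover have "inf b (inf d1 d2) = bot" using d(4) by (metis inf.left_commute inf_bot_right)
  ultimately have "bot \<in> p" by (simp add: inf_sup_distrib2)
  then show False using lattice_filterD(2)[OF pf] by simp
qed

lemma lattice_filter_Union_chain:
  assumes "\<C> \<noteq> {}" and "subset.chain {G. lattice_filter G} \<C>"
  shows "lattice_filter (\<Union>\<C>)"
proof -
  have filters: "\<And>G. G \<in> \<C> \<Longrightarrow> lattice_filter G"
    and comparable: "\<And>G H. G \<in> \<C> \<Longrightarrow> H \<in> \<C> \<Longrightarrow> G \<subseteq> H \<or> H \<subseteq> G"
    using assms(2) unfolding subset_chain_def by blast+
  show ?thesis
    unfolding lattice_filter_def
  proof (intro conjI ballI allI impI)
    obtain G where "G \<in> \<C>" using assms(1) by blast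
    then show "top \<in> \<Union>\<C>" using lattice_filterD(1)[OF filters] by blast
    show "bot \<notin> \<Union>\<C>" using lattice_filterD(2)[OF filters] by blast
  next
    fix a b assume "a \<in> \<Union>\<C>" "b \<in> \<Union>\<C>"
    then obtain G H where GH: "G \<in> \<C>" "H \<in> \<C>" and "a \<in> G" "b \<in> H" by blast
    then have "inf a b \<in> G \<or> inf a b \<in> H"
      using comparable[OF GH] lattice_filterD(3)[OF filters[OF GH(1)]]
        lattice_filterD(3)[OF filters[OF GH(2)]] by blast
    then show "inf a b \<in> \<Union>\<C>" using GH by blast
  next
    fix a b assume "a \<in> \<Union>\<C>" "a \<le> b"
    then obtain G where "G \<in> \<C>" "a \<in> G" by blast
    then show "b \<in> \<Union>\<C>" using lattice_filterD(4)[OF filters] \<open>a \<le> b\<close> by blast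
  qed
qed

lemma lattice_ultrafilter_extension:
  assumes "lattice_filter F"
  obtains p where "lattice_ultrafilter p" "F \<subseteq> p"
proof -
  define \<A> where "\<A> = {G. lattice_filter G \<and> F \<subseteq> G}"
  have "\<exists>M\<in>\<A>. \<forall>G\<in>\<A>. M \<subseteq> G \<longrightarrow> G = M"
  proof (rule subset_Zorn_nonempty)
    show "\<A> \<noteq> {}" using assms unfolding \<A>_def by auto
  next
    fix \<C> assume ne: "\<C> \<noteq> {}" and chain: "subset.chain \<A> \<C>"
    then have "\<C> \<subseteq> \<A>" by (simp add: subset_chain_def)
    have "subset.chain {G. lattice_filter G} \<C>"
      using chain unfolding \<A>_def subset_chain_def by blast
    then have "lattice_filter (\<Union>\<C>)" using lattice_filter_Union_chain[OF ne] by blast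
    moreover have "F \<subseteq> \<Union>\<C>" using ne \<open>\<C> \<subseteq> \<A>\<close> unfolding \<A>_def by blast
    ultimately show "\<Union>\<C> \<in> \<A>" unfolding \<A>_def by simp
  qed
  then obtain p where p: "p \<in> \<A>" and maximal: "\<forall>G\<in>\<A>. p \<subseteq> G \<longrightarrow> G = p" by blast
  have "lattice_ultrafilter p" unfolding lattice_ultrafilter_def
  proof (intro conjI allI impI)
    show "lattice_filter p" using p by (simp add: \<A>_def)
    fix G assume "lattice_filter G \<and> p \<subseteq> G"
    then show "G = p" using maximal p unfolding \<A>_def by auto
  qed
  then show thesis using that p unfolding \<A>_def by blast
qed

lemma topspace_wallman_space: "topspace (wallman_space T) = wallman_points T"
proof -
  have "wallman_points T - wallman_basic bot = wallman_points T"
    unfolding wallman_points_def wallman_basic_def lattice_ultrafilter_def lattice_filter_def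
    by blast
  then show ?thesis
    unfolding wallman_space_def topology_generated_by_topspace by blast
qed

lemma openin_wallman_space_basic_complement:
  "openin (wallman_space T) (wallman_points T - wallman_basic a)"
  unfolding wallman_space_def by (rule topology_generated_by_Basis) blast

lemma closed_base_sublatticeD:
  assumes "closed_base_sublattice X B"
  shows "b \<in> B \<Longrightarrow> closedin X b" and "{} \<in> B" and "topspace X \<in> B"
    and "b \<in> B \<Longrightarrow> b' \<in> B \<Longrightarrow> b \<inter> b' \<in> B"
  using assms unfolding closed_base_sublattice_def by simp_all

lemma closed_base_sublatticeE:
  assumes "closed_base_sublattice X B" "closedin X C"
  obtains \<A> where "\<A> \<subseteq> B" "C = topspace X \<inter> \<Inter>\<A>"
proof -
  have "\<exists>\<A>\<subseteq>B. C = topspace X \<inter> \<Inter>\<A>"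
    using assms unfolding closed_base_sublattice_def by simp
  then show thesis by (elim exE conjE) (rule that)
qed

lemma lattice_embedding_onD:
  assumes "lattice_embedding_on B S f"
  shows "inj_on f B" and "f {} = bot" and "f S = top"
    and "b \<in> B \<Longrightarrow> b' \<in> B \<Longrightarrow> f (b \<inter> b') = inf (f b) (f b')"
    and "b \<in> B \<Longrightarrow> b' \<in> B \<Longrightarrow> f (b \<union> b') = sup (f b) (f b')"
  using assms unfolding lattice_embedding_on_def by simp_all

lemma closed_base_sublattice_separation:
  assumes "closed_base_sublattice X B" "closedin X C" "x \<in> topspace X" "x \<notin> C"
  obtains b where "b \<in> B" "C \<subseteq> b" "x \<notin> b"
proof -
  obtain \<A> where \<A>: "\<A> \<subseteq> B" "C = topspace X \<inter> \<Inter>\<A>"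
    using assms(1,2) by (rule closed_base_sublatticeE)
  then have "x \<notin> \<Inter>\<A>" using assms(3,4) by simp
  then obtain b where b: "b \<in> \<A>" "x \<notin> b" by blast
  have "C \<subseteq> b" unfolding \<A>(2) using Inter_lower[OF b(1)] by blast
  then show thesis using that \<A>(1) b by blast
qed

lemma closed_base_sublattice_Inter_point:
  assumes "t1_space X" "closed_base_sublattice X B" "x \<in> topspace X"
  shows "topspace X \<inter> \<Inter>{b \<in> B. x \<in> b} = {x}"
proof -
  have "closedin X {x}" using assms(1,3) by (rule closedin_t1_singleton)
  with assms(2) obtain \<A> where \<A>: "\<A> \<subseteq> B" "{x} = topspace X \<inter> \<Inter>\<A>"
    by (rule closed_base_sublatticeE)
  have "x \<in> \<Inter>\<A>" using \<A>(2) by (metis Int_iff singletonI)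
  then have "\<Inter>{b \<in> B. x \<in> b} \<subseteq> \<Inter>\<A>" using \<A>(1) by (intro Inter_anti_mono) blast
  then have "topspace X \<inter> \<Inter>{b \<in> B. x \<in> b} \<subseteq> {x}" using \<A>(2) by auto
  then show ?thesis using assms(3) by auto
qed

lemma closed_base_sublattice_separating_cover:
  assumes X: "regular_space X" and base: "closed_base_sublattice X B"
    and C: "closedin X C" and x: "x \<in> topspace X" "x \<notin> C"
  obtains b where "b \<in> B" "x \<notin> b" "\<And>z. z \<in> C \<Longrightarrow> \<exists>b'\<in>B. z \<notin> b' \<and> b \<union> b' = topspace X"
proof -
  have "x \<in> topspace X - C" using x by blast
  then obtain U V where UV: "openin X U" "openin X V" "x \<in> U" "C \<subseteq> V" "disjnt U V"
    using X C unfolding regular_space_def by meson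
  have B_sub: "\<And>b. b \<in> B \<Longrightarrow> b \<subseteq> topspace X"
    using closedin_subset closed_base_sublatticeD(1)[OF base] by blast
  have "x \<notin> topspace X - U" using UV(3) by blast
  then obtain b where b: "b \<in> B" "topspace X - U \<subseteq> b" "x \<notin> b"
    using closed_base_sublattice_separation[OF base closedin_diff[OF closedin_topspace UV(1)] x(1)]
    by blast
  have "\<exists>b'\<in>B. z \<notin> b' \<and> b \<union> b' = topspace X" if "z \<in> C" for z
  proof -
    have "z \<in> topspace X" using closedin_subset[OF C] that by blast
    moreover have "z \<notin> topspace X - V" using UV(4) that by blast
    ultimately obtain b' where b': "b' \<in> B" "topspace X - V \<subseteq> b'" "z \<notin> b'"
      using closed_base_sublattice_separation[OF base closedin_diff[OF closedin_topspace UV(2)]]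
      by blast
    have "b \<union> b' = topspace X"
      using b b' B_sub UV(5) unfolding disjnt_def by blast
    then show ?thesis using b' by blast
  qed
  then show thesis using that b by blast
qed

locale closed_base_embedding =
  fixes X :: "'a topology" and B :: "'a set set"
    and f :: "'a set \<Rightarrow> 'l::{bounded_lattice, distrib_lattice}"
  assumes compact: "compact_space X" and Hausdorff: "Hausdorff_space X"
    and base: "closed_base_sublattice X B"
    and embedding: "lattice_embedding_on B (topspace X) f"
begin

definition adherence :: "'l set \<Rightarrow> 'a set" where
  "adherence p = topspace X \<inter> \<Inter>{b \<in> B. f b \<in> p}"

definition ultrafilter_point :: "'l set \<Rightarrow> 'a" where
  "ultrafilter_point p = the_elem (adherence p)"

lemma regular: "regular_space X"
  using compact Hausdorff by (rule compact_Hausdorff_imp_regular_space)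

lemma t1: "t1_space X"
  using Hausdorff by (rule Hausdorff_imp_t1_space)

lemma base_Inter_mem:
  assumes "finite \<F>" "\<F> \<noteq> {}" "\<F> \<subseteq> {b \<in> B. f b \<in> p}" and p: "lattice_filter p"
  shows "\<Inter>\<F> \<in> B \<and> f (\<Inter>\<F>) \<in> p"
  using assms(1-3)
proof (induction \<F> rule: finite_ne_induct)
  case (singleton b)
  then show ?case by simp
next
  case (insert b \<F>)
  then have b: "b \<in> B" "f b \<in> p" and IH: "\<Inter>\<F> \<in> B" "f (\<Inter>\<F>) \<in> p" by auto
  have "b \<inter> \<Inter>\<F> \<in> B" using closed_base_sublatticeD(4)[OF base b(1) IH(1)] .
  moreover have "f (b \<inter> \<Inter>\<F>) \<in> p"
    using lattice_embedding_onD(4)[OF embedding b(1) IH(1)] lattice_filterD(3)[OF p b(2) IH(2)]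
    by simp
  ultimately show ?case by simp
qed

lemma adherence_nonempty:
  assumes p: "lattice_ultrafilter p"
  shows "adherence p \<noteq> {}"
proof -
  have pf: "lattice_filter p" using p by (rule lattice_ultrafilter_imp_filter)
  have "\<Inter>\<F> \<noteq> {}" if "finite \<F>" "\<F> \<subseteq> {b \<in> B. f b \<in> p}" for \<F>
  proof (cases "\<F> = {}")
    case False
    then have "f (\<Inter>\<F>) \<in> p" using base_Inter_mem[OF that(1) _ that(2) pf] by simp
    then have "f (\<Inter>\<F>) \<noteq> f {}"
      using lattice_embedding_onD(2)[OF embedding] lattice_filterD(2)[OF pf] by auto
    then show ?thesis by auto
  qed simp
  moreover have "\<forall>b \<in> {b \<in> B. f b \<in> p}. closedin X b"
    using closed_base_sublatticeD(1)[OF base] by blast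
  ultimately have "\<Inter>{b \<in> B. f b \<in> p} \<noteq> {}"
    using compact[unfolded compact_space_fip, rule_format, of "{b \<in> B. f b \<in> p}"] by blast
  moreover have "topspace X \<in> {b \<in> B. f b \<in> p}"
    using closed_base_sublatticeD(3)[OF base] lattice_embedding_onD(3)[OF embedding]
      lattice_filterD(1)[OF pf] by simp
  ultimately show ?thesis unfolding adherence_def by blast
qed

lemma ultrafilter_mem_cover:
  assumes p: "lattice_ultrafilter p" and "b \<in> B" "b' \<in> B" "b \<union> b' = topspace X"
  shows "f b \<in> p \<or> f b' \<in> p"
proof -
  have "sup (f b) (f b') = top"
    using lattice_embedding_onD(5)[OF embedding assms(2,3)] lattice_embedding_onD(3)[OF embedding]
      assms(4) by simp
  then have "sup (f b) (f b') \<in> p"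
    using lattice_filterD(1)[OF lattice_ultrafilter_imp_filter[OF p]] by simp
  then show ?thesis using lattice_ultrafilter_sup_mem[OF p] by blast
qed

lemma adherence_subsingleton:
  assumes p: "lattice_ultrafilter p" and "x \<in> adherence p" "y \<in> adherence p"
  shows "x = y"
proof (rule ccontr)
  assume "x \<noteq> y"
  have x: "x \<in> topspace X" and y: "y \<in> topspace X" using assms(2,3) unfolding adherence_def by auto
  have "closedin X {y}"
    using t1 y by (rule closedin_t1_singleton)
  moreover have "x \<notin> {y}" using \<open>x \<noteq> y\<close> by simp
  ultimately obtain b where b: "b \<in> B" "x \<notin> b"
    and cover: "\<And>z. z \<in> {y} \<Longrightarrow> \<exists>b'\<in>B. z \<notin> b' \<and> b \<union> b' = topspace X"
    using closed_base_sublattice_separating_cover[OF regular base _ x(1)] by blast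
  then obtain b' where b': "b' \<in> B" "y \<notin> b'" "b \<union> b' = topspace X" by blast
  have "f b \<in> p \<or> f b' \<in> p" using ultrafilter_mem_cover[OF p b(1) b'(1,3)] .
  then show False using b b' assms(2,3) unfolding adherence_def by blast
qed

lemma adherence_eq_singleton:
  assumes p: "lattice_ultrafilter p"
  shows "adherence p = {ultrafilter_point p}"
proof -
  obtain x where "x \<in> adherence p" using adherence_nonempty[OF p] by blast
  then have "adherence p = {x}" using adherence_subsingleton[OF p] by blast
  then show ?thesis unfolding ultrafilter_point_def by simp
qed

lemma ultrafilter_point_in_topspace: "lattice_ultrafilter p \<Longrightarrow> ultrafilter_point p \<in> topspace X"
  using adherence_eq_singleton unfolding adherence_def by blast

lemma ultrafilter_point_mem:
  "lattice_ultrafilter p \<Longrightarrow> b \<in> B \<Longrightarrow> f b \<in> p \<Longrightarrow> ultrafilter_point p \<in> b"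
  using adherence_eq_singleton unfolding adherence_def by blast

lemma ultrafilter_point_not_in_closedin:
  assumes C: "closedin X C" and p: "lattice_ultrafilter p" "ultrafilter_point p \<notin> C"
  obtains b where "b \<in> B" "f b \<notin> p"
    "\<And>q. lattice_ultrafilter q \<Longrightarrow> f b \<notin> q \<Longrightarrow> ultrafilter_point q \<notin> C"
proof -
  obtain b where b: "b \<in> B" "ultrafilter_point p \<notin> b"
    and cover: "\<And>z. z \<in> C \<Longrightarrow> \<exists>b'\<in>B. z \<notin> b' \<and> b \<union> b' = topspace X"
    using closed_base_sublattice_separating_cover[OF regular base C
        ultrafilter_point_in_topspace[OF p(1)] p(2)] by blast
  have "ultrafilter_point q \<notin> C" if q: "lattice_ultrafilter q" "f b \<notin> q" for q
  proof
    assume "ultrafilter_point q \<in> C"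
    then obtain b' where b': "b' \<in> B" "ultrafilter_point q \<notin> b'" "b \<union> b' = topspace X"
      using cover by blast
    then have "f b' \<notin> q" using ultrafilter_point_mem[OF q(1)] by blast
    then show False using ultrafilter_mem_cover[OF q(1) b(1) b'(1,3)] q(2) by blast
  qed
  moreover have "f b \<notin> p" using b ultrafilter_point_mem[OF p(1)] by blast
  ultimately show thesis using that b(1) by blast
qed

lemma continuous_map_ultrafilter_point: "continuous_map (wallman_space T) X ultrafilter_point"
  unfolding continuous_map_closedin
proof (intro conjI allI impI)
  show "ultrafilter_point \<in> topspace (wallman_space T) \<rightarrow> topspace X"
    using ultrafilter_point_in_topspace by (simp add: topspace_wallman_space wallman_points_def)
next
  fix C assume C: "closedin X C"
  define W where "W = wallman_points T"
  define S where "S = {q \<in> W. ultrafilter_point q \<in> C}"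
  have "\<exists>N. openin (wallman_space T) N \<and> p \<in> N \<and> N \<subseteq> W - S" if "p \<in> W - S" for p
  proof -
    have "lattice_ultrafilter p" "ultrafilter_point p \<notin> C"
      using that by (simp_all add: W_def S_def wallman_points_def)
    then obtain b where "b \<in> B" "f b \<notin> p"
      and avoid: "\<And>q. lattice_ultrafilter q \<Longrightarrow> f b \<notin> q \<Longrightarrow> ultrafilter_point q \<notin> C"
      using ultrafilter_point_not_in_closedin[OF C] by blast
    then have "p \<in> W - wallman_basic (f b)" and "W - wallman_basic (f b) \<subseteq> W - S"
      using that by (auto simp: W_def S_def wallman_points_def wallman_basic_def)
    then show ?thesis
      using openin_wallman_space_basic_complement unfolding W_def by blast
  qed
  then have "openin (wallman_space T) (W - S)" by (subst openin_subopen) blast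
  moreover have "S \<subseteq> W" unfolding S_def by blast
  ultimately show "closedin (wallman_space T) {q \<in> topspace (wallman_space T). ultrafilter_point q \<in> C}"
    unfolding closedin_def topspace_wallman_space W_def[symmetric] S_def[symmetric] by blast
qed

lemma lattice_filter_point_filter:
  assumes x: "x \<in> topspace X"
  shows "lattice_filter {c. \<exists>b\<in>B. x \<in> b \<and> f b \<le> c}" (is "lattice_filter ?F")
  unfolding lattice_filter_def
proof (intro conjI ballI allI impI)
  show "top \<in> ?F" using closed_base_sublatticeD(3)[OF base] x top_greatest by blast
  show "bot \<notin> ?F"
  proof
    assume "bot \<in> ?F"
    then obtain b where b: "b \<in> B" "x \<in> b" "f b \<le> bot" by blast
    then have "f b = f {}" using lattice_embedding_onD(2)[OF embedding] le_bot[OF b(3)] by simp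
    then have "b = {}"
      using inj_onD[OF lattice_embedding_onD(1)[OF embedding] _ b(1) closed_base_sublatticeD(2)[OF base]]
      by blast
    then show False using b(2) by simp
  qed
next
  fix c d assume "c \<in> ?F" "d \<in> ?F"
  then obtain b b' where b: "b \<in> B" "x \<in> b" "f b \<le> c" and b': "b' \<in> B" "x \<in> b'" "f b' \<le> d"
    by blast
  have "f (b \<inter> b') \<le> inf c d"
    using lattice_embedding_onD(4)[OF embedding b(1) b'(1)] inf_mono[OF b(3) b'(3)] by simp
  moreover have "b \<inter> b' \<in> B" using closed_base_sublatticeD(4)[OF base b(1) b'(1)] .
  moreover have "x \<in> b \<inter> b'" using b(2) b'(2) by blast
  ultimately show "inf c d \<in> ?F" by blast
next
  fix c d assume "c \<in> ?F" "c \<le> d"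
  then show "d \<in> ?F" using order_trans by blast
qed

lemma image_ultrafilter_point: "ultrafilter_point ` topspace (wallman_space T) = topspace X"
proof
  show "ultrafilter_point ` topspace (wallman_space T) \<subseteq> topspace X"
    using ultrafilter_point_in_topspace by (auto simp: topspace_wallman_space wallman_points_def)
next
  show "topspace X \<subseteq> ultrafilter_point ` topspace (wallman_space T)"
  proof
    fix x assume x: "x \<in> topspace X"
    obtain p where p: "lattice_ultrafilter p" and point_filter: "{c. \<exists>b\<in>B. x \<in> b \<and> f b \<le> c} \<subseteq> p"
      using lattice_ultrafilter_extension[OF lattice_filter_point_filter[OF x]] by blast
    have "ultrafilter_point p \<in> b" if "b \<in> B" "x \<in> b" for b
      using ultrafilter_point_mem[OF p that(1)] point_filter that by blast
    then have "ultrafilter_point p \<in> topspace X \<inter> \<Inter>{b \<in> B. x \<in> b}"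
      using ultrafilter_point_in_topspace[OF p] by blast
    then have "ultrafilter_point p = x"
      unfolding closed_base_sublattice_Inter_point[OF t1 base x]
      by simp
    then show "x \<in> ultrafilter_point ` topspace (wallman_space T)"
      using p by (auto simp: topspace_wallman_space wallman_points_def)
  qed
qed

end

theorem lemma5p2:
  fixes X :: "'a topology" and B :: "'a set set"
    and T :: "'l::{bounded_lattice, distrib_lattice} itself"
    and f :: "'a set \<Rightarrow> 'l"
  assumes "compact_space X" and "Hausdorff_space X"
    and "normal_lattice T" and "disjunctive_lattice T"
    and "closed_base_sublattice X B"
    and "lattice_embedding_on B (topspace X) f"
  shows "\<exists>g. continuous_map (wallman_space T) X g \<and>
             g ` topspace (wallman_space T) = topspace X"
proof -
  interpret closed_base_embedding X B f
    using assms(1,2,5,6) by unfold_locales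
  show ?thesis
    using continuous_map_ultrafilter_point image_ultrafilter_point by blast
qed

end
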